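(* Let $\beta=(\beta_n)_{n\ge0}$ be a bounded sequence of positive numbers with a polynomial minoration. Assume that for every $\delta>0$ there exists $C=C(\delta)>0$ such that $\beta_m\le C\beta_n$ whenever $m>(1+\delta)n$. Then for every symbol $\phi$ with $\phi(0)=0$, the composition operator $C_\phi$ is bounded on $H^2(\beta)$.
   Context: $H^2(\beta)$ is the Hilbert space of analytic functions $f(z)=\sum_{n\ge0}a_nz^n$ on the unit disk $\mathbb D$ with $\|f\|^2=\sum_{n\ge0}|a_n|^2\beta_n<\infty$. A symbol is a non-constant analytic map $\phi:\mathbb D\to\mathbb D$ and $C_\phi f=f\circ\phi$. $\beta$ has a polynomial minoration if there are constants $\delta,\alpha>0$ with $\beta_n\ge\delta n^{-\alpha}$ for all $n\ge1$. *)

theory Defs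
  imports "HOL-Analysis.Analysis"
begin

definition taylor_coeff :: "(complex \<Rightarrow> complex) \<Rightarrow> nat \<Rightarrow> complex" where
  "taylor_coeff f n = (deriv ^^ n) f 0 / of_nat (fact n)"

definition H2 :: "(nat \<Rightarrow> real) \<Rightarrow> (complex \<Rightarrow> complex) set" where
  "H2 \<beta> = {f. f holomorphic_on ball 0 1 \<and>
               summable (\<lambda>n. (cmod (taylor_coeff f n))\<^sup>2 * \<beta> n)}"

definition H2_norm :: "(nat \<Rightarrow> real) \<Rightarrow> (complex \<Rightarrow> complex) \<Rightarrow> real" where
  "H2_norm \<beta> f = sqrt (\<Sum>n. (cmod (taylor_coeff f n))\<^sup>2 * \<beta> n)"

definition symbol :: "(complex \<Rightarrow> complex) \<Rightarrow> bool" where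
  "symbol \<phi> \<longleftrightarrow> \<phi> holomorphic_on ball 0 1 \<and> \<phi> ` ball 0 1 \<subseteq> ball 0 1 \<and>
     \<not> (\<exists>c. \<forall>z\<in>ball 0 1. \<phi> z = c)"

definition comp_op_bounded :: "(nat \<Rightarrow> real) \<Rightarrow> (complex \<Rightarrow> complex) \<Rightarrow> bool" where
  "comp_op_bounded \<beta> \<phi> \<longleftrightarrow>
     (\<forall>f\<in>H2 \<beta>. f \<circ> \<phi> \<in> H2 \<beta>) \<and>
     (\<exists>C. \<forall>f\<in>H2 \<beta>. H2_norm \<beta> (f \<circ> \<phi>) \<le> C * H2_norm \<beta> f)"

definition polynomial_minoration :: "(nat \<Rightarrow> real) \<Rightarrow> bool" where
  "polynomial_minoration \<beta> \<longleftrightarrow>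
     (\<exists>\<delta>>0. \<exists>\<alpha>>0. \<forall>n\<ge>1. \<beta> n \<ge> \<delta> * real n powr (-\<alpha>))"

end

(*
  Write f = \<Sum> a\<^sub>k z\<^sup>k. By Schwarz's lemma \<phi> is either a rotation, for which C\<^sub>\<phi> is an
  isometry, or |\<phi>| \<le> m < 1/2 on |z| = 1/2. In the second case the Cauchy estimates give
  |coefficient n of \<phi>\<^sup>k| \<le> \<theta>\<^sup>k with \<theta> < 1 whenever n \<le> (1 + \<delta>) k. Split f at the degree
  j / (1 + \<delta>): by Littlewood's subordination principle the low-degree part contributes at most
  \<Sum> |a\<^sub>k|\<^sup>2 to the first j + 1 coefficients of f \<circ> \<phi>, and the high-degree part at most
  \<Sum> |a\<^sub>k|\<^sup>2 k\<^sup>2 \<theta>\<^sup>2\<^sup>k, which is O(\<Sum> |a\<^sub>k|\<^sup>2 \<beta>\<^sub>k) by the polynomial minoration. Abel summation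
  against the decreasing majorant of \<beta>, together with \<beta>\<^sub>m \<le> C \<beta>\<^sub>n for m > (1 + \<delta>) n, turns
  these partial-sum bounds into \<Sum> |c\<^sub>n(f \<circ> \<phi>)|\<^sup>2 \<beta>\<^sub>n \<le> K \<Sum> |a\<^sub>k|\<^sup>2 \<beta>\<^sub>k.
*)

theory Submission
  imports Defs "HOL-Complex_Analysis.Complex_Analysis" "HOL-Real_Asymp.Real_Asymp"
begin

definition cis_turn :: "real \<Rightarrow> complex" where
  "cis_turn x = exp (2 * of_real pi * \<i> * of_real x)"

lemma norm_cis_turn [simp]: "norm (cis_turn x) = 1"
  unfolding cis_turn_def by (simp add: norm_exp_eq_Re)

lemma cis_turn_nonzero [simp]: "cis_turn x \<noteq> 0"
  unfolding cis_turn_def by simp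

lemma cnj_cis_turn: "cnj (cis_turn x) = inverse (cis_turn x)"
  unfolding cis_turn_def by (simp add: exp_cnj flip: exp_minus)

lemma continuous_on_cis_turn: "continuous_on S cis_turn"
  unfolding cis_turn_def by (intro continuous_intros)

lemma circlepath_eq_cis_turn: "circlepath 0 r x = of_real r * cis_turn x"
  by (simp add: circlepath cis_turn_def)

lemma taylor_coeff_has_integral_circle:
  assumes holg: "g holomorphic_on ball 0 1" and r: "0 < r" "r < 1"
  shows "((\<lambda>x. g (of_real r * cis_turn x) * cnj (cis_turn x) ^ k)
           has_integral taylor_coeff g k * r ^ k) {0..1}"
proof -
  let ?c = "2 * pi * \<i> / of_real r ^ k"
  have "((\<lambda>u. g u / (u - 0) ^ Suc k) has_contour_integral 2 * pi * \<i> / fact k * (deriv ^^ k) g 0)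
          (circlepath 0 r)"
    using r by (intro Cauchy_has_contour_integral_higher_derivative_circlepath
                  holomorphic_on_imp_continuous_on holomorphic_on_subset[OF holg]) auto
  then have "((\<lambda>x. g (circlepath 0 r x) / circlepath 0 r x ^ Suc k *
                 vector_derivative (circlepath 0 r) (at x within {0..1}))
              has_integral ?c * (taylor_coeff g k * r ^ k)) {0..1}"
    using r by (simp add: has_contour_integral_def taylor_coeff_def field_simps)
  moreover have "g (circlepath 0 r x) / circlepath 0 r x ^ Suc k *
                   vector_derivative (circlepath 0 r) (at x within {0..1})
                 = ?c * (g (of_real r * cis_turn x) * cnj (cis_turn x) ^ k)" if "x \<in> {0..1}" for x
  proof -
    have "vector_derivative (circlepath 0 r) (at x within {0..1}) = 2 * pi * \<i> * r * cis_turn x"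
      using that vector_derivative_circlepath01[of x 0 r] by (simp add: cis_turn_def)
    then show ?thesis
      using r by (simp add: circlepath_eq_cis_turn cnj_cis_turn field_simps)
  qed
  ultimately have "((\<lambda>x. ?c * (g (of_real r * cis_turn x) * cnj (cis_turn x) ^ k))
                    has_integral ?c * (taylor_coeff g k * r ^ k)) {0..1}"
    by (subst has_integral_cong[symmetric]) auto
  then show ?thesis
    using r by (subst (asm) has_integral_mult_right_iff) auto
qed

lemma taylor_coeff_cong:
  assumes "f holomorphic_on ball 0 1" "g holomorphic_on ball 0 1"
    and "\<And>z. z \<in> ball 0 1 \<Longrightarrow> f z = g z"
  shows "taylor_coeff f n = taylor_coeff g n"
  unfolding taylor_coeff_def
  using higher_deriv_transform_within_open[OF assms(1,2) open_ball _ assms(3), of 0 n] by simp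

lemma taylor_coeff_add:
  assumes "f holomorphic_on ball 0 1" "g holomorphic_on ball 0 1"
  shows "taylor_coeff (\<lambda>z. f z + g z) n = taylor_coeff f n + taylor_coeff g n"
  unfolding taylor_coeff_def
  using higher_deriv_add[OF assms open_ball, of 0 n] by (simp add: add_divide_distrib)

lemma taylor_coeff_cmult:
  assumes "f holomorphic_on ball 0 1"
  shows "taylor_coeff (\<lambda>z. c * f z) n = c * taylor_coeff f n"
  unfolding taylor_coeff_def
  using higher_deriv_cmult[OF assms _ open_ball, of 0 n c] by simp

lemma taylor_coeff_0 [simp]: "taylor_coeff (\<lambda>z. 0) n = 0"
proof -
  have "(deriv ^^ n) (\<lambda>z::complex. 0::complex) = (\<lambda>z. 0)"
    by (induction n) auto
  then show ?thesis
    by (simp add: taylor_coeff_def)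
qed

lemma taylor_coeff_sum:
  assumes "finite K" "\<And>k. k \<in> K \<Longrightarrow> F k holomorphic_on ball 0 1"
  shows "taylor_coeff (\<lambda>z. \<Sum>k\<in>K. F k z) n = (\<Sum>k\<in>K. taylor_coeff (F k) n)"
  using assms
proof (induction K rule: finite_induct)
  case (insert k K)
  have "(\<lambda>z. \<Sum>k\<in>K. F k z) holomorphic_on ball 0 1"
    using insert by (intro holomorphic_on_sum) auto
  then show ?case
    using insert taylor_coeff_add[of "F k" "\<lambda>z. \<Sum>k\<in>K. F k z"] by simp
qed simp

lemma taylor_coeff_linear_combination:
  fixes L :: nat
  assumes "\<And>k. F k holomorphic_on ball 0 1"
  shows "taylor_coeff (\<lambda>z. \<Sum>k\<le>L. p k * F k z) n = (\<Sum>k\<le>L. p k * taylor_coeff (F k) n)"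
proof -
  have "taylor_coeff (\<lambda>z. \<Sum>k\<le>L. p k * F k z) n = (\<Sum>k\<le>L. taylor_coeff (\<lambda>z. p k * F k z) n)"
    by (rule taylor_coeff_sum) (simp_all add: holomorphic_intros assms)
  also have "\<dots> = (\<Sum>k\<le>L. p k * taylor_coeff (F k) n)"
    by (intro sum.cong refl taylor_coeff_cmult assms)
  finally show ?thesis .
qed

lemma taylor_coeff_power: "taylor_coeff (\<lambda>z. z ^ m) n = (if n = m then 1 else 0)"
proof -
  have "(deriv ^^ n) (\<lambda>w. (w - 0) ^ m) 0 = pochhammer (of_nat (Suc m - n)) n * (0 - 0 :: complex) ^ (m - n)"
    by (rule higher_deriv_power)
  then show ?thesis
    by (cases n m rule: linorder_cases)
       (simp_all add: taylor_coeff_def pochhammer_fact[symmetric] pochhammer_0_left)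
qed

lemma taylor_series:
  assumes "f holomorphic_on ball 0 1" "w \<in> ball 0 1"
  shows "(\<lambda>k. taylor_coeff f k * w ^ k) sums f w"
  using holomorphic_power_series[OF assms] by (simp add: taylor_coeff_def)

lemma taylor_coeff_power_mult_eq_0:
  assumes hol\<phi>: "\<phi> holomorphic_on ball 0 1" and "\<phi> 0 = 0"
    and "H holomorphic_on ball 0 1" "n < m"
  shows "taylor_coeff (\<lambda>z. \<phi> z ^ m * H z) n = 0"
  unfolding taylor_coeff_def using assms(3,4)
proof (induction m arbitrary: H n)
  case (Suc m H n)
  have hol: "(\<lambda>z. \<phi> z ^ m * H z) holomorphic_on ball 0 1"
    by (intro holomorphic_intros hol\<phi> Suc.prems)
  have "(deriv ^^ n) (\<lambda>z. \<phi> z * (\<phi> z ^ m * H z)) 0 =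
      (\<Sum>i = 0..n. of_nat (n choose i) * (deriv ^^ i) \<phi> 0 * (deriv ^^ (n - i)) (\<lambda>z. \<phi> z ^ m * H z) 0)"
    by (rule higher_deriv_mult[OF hol\<phi> hol]) auto
  also have "\<dots> = 0"
  proof (intro sum.neutral ballI)
    fix i assume "i \<in> {0..n}"
    then show "of_nat (n choose i) * (deriv ^^ i) \<phi> 0 * (deriv ^^ (n - i)) (\<lambda>z. \<phi> z ^ m * H z) 0 = 0"
      using Suc.prems Suc.IH[OF Suc.prems(1), of "n - i"] \<open>\<phi> 0 = 0\<close> by (cases "i = 0") auto
  qed
  finally show ?case
    by (simp add: mult.assoc)
qed simp

lemma holomorphic_taylor_remainder:
  assumes holf: "f holomorphic_on ball 0 1"
  obtains h where "h holomorphic_on ball 0 1"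
    and "\<And>w. w \<in> ball 0 1 \<Longrightarrow> f w = (\<Sum>k\<le>j. taylor_coeff f k * w ^ k) + w ^ Suc j * h w"
proof
  define a where "a k = taylor_coeff f k" for k
  define h where "h w = (if w = 0 then a (Suc j) else (f w - (\<Sum>k\<le>j. a k * w ^ k)) / w ^ Suc j)" for w
  have "(\<lambda>i. a (i + Suc j) * (w - 0) ^ i) sums h w" if w: "w \<in> ball 0 1" for w
  proof (cases "w = 0")
    case True
    then show ?thesis
      using powser_sums_zero[of "\<lambda>i. a (i + Suc j)"] by (simp add: h_def)
  next
    case False
    have "(\<lambda>i. a (i + Suc j) * w ^ (i + Suc j)) sums (f w - (\<Sum>i<Suc j. a i * w ^ i))"
      using taylor_series[OF holf w] by (subst sums_iff_shift') (simp add: a_def)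
    then have "(\<lambda>i. a (i + Suc j) * w ^ (i + Suc j) / w ^ Suc j) sums h w"
      using False unfolding h_def lessThan_Suc_atMost by (simp only: sums_divide if_False)
    moreover have "a (i + Suc j) * w ^ (i + Suc j) / w ^ Suc j = a (i + Suc j) * (w - 0) ^ i" for i
      using False by (simp add: power_add)
    ultimately show ?thesis
      by simp
  qed
  then show "h holomorphic_on ball 0 1"
    by (rule power_series_holomorphic)
  show "f w = (\<Sum>k\<le>j. taylor_coeff f k * w ^ k) + w ^ Suc j * h w" if "w \<in> ball 0 1" for w
  proof (cases "w = 0")
    case True
    then show ?thesis
      by (simp add: sum.atMost_shift taylor_coeff_def)
  qed (simp add: h_def a_def)
qed

lemma taylor_coeff_comp_eq_sum:
  assumes holf: "f holomorphic_on ball 0 1" and hol\<phi>: "\<phi> holomorphic_on ball 0 1"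
    and \<phi>_ball: "\<phi> ` ball 0 1 \<subseteq> ball 0 1" and \<phi>0: "\<phi> 0 = 0" and "n \<le> j"
  shows "taylor_coeff (f \<circ> \<phi>) n = (\<Sum>k\<le>j. taylor_coeff f k * taylor_coeff (\<lambda>z. \<phi> z ^ k) n)"
proof -
  obtain h where holh: "h holomorphic_on ball 0 1"
    and feq: "\<And>w. w \<in> ball 0 1 \<Longrightarrow> f w = (\<Sum>k\<le>j. taylor_coeff f k * w ^ k) + w ^ Suc j * h w"
    using holomorphic_taylor_remainder[OF holf] by blast
  define P where "P z = (\<Sum>k\<le>j. taylor_coeff f k * \<phi> z ^ k)" for z
  define R where "R z = \<phi> z ^ Suc j * h (\<phi> z)" for z
  have holP: "P holomorphic_on ball 0 1"
    unfolding P_def by (intro holomorphic_intros hol\<phi>)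
  have holh\<phi>: "(h \<circ> \<phi>) holomorphic_on ball 0 1"
    using holomorphic_on_compose_gen[OF hol\<phi> holh \<phi>_ball] .
  then have holR: "R holomorphic_on ball 0 1"
    unfolding R_def o_def by (intro holomorphic_intros hol\<phi>)
  have "taylor_coeff (f \<circ> \<phi>) n = taylor_coeff (\<lambda>z. P z + R z) n"
  proof (rule taylor_coeff_cong)
    show "(f \<circ> \<phi>) holomorphic_on ball 0 1"
      by (rule holomorphic_on_compose_gen[OF hol\<phi> holf \<phi>_ball])
    show "(\<lambda>z. P z + R z) holomorphic_on ball 0 1"
      by (rule holomorphic_on_add[OF holP holR])
    fix z :: complex assume "z \<in> ball 0 1"
    then have "\<phi> z \<in> ball 0 1"
      using \<phi>_ball by blast
    then show "(f \<circ> \<phi>) z = P z + R z"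
      by (simp add: P_def R_def feq)
  qed
  also have "\<dots> = taylor_coeff P n + taylor_coeff R n"
    by (rule taylor_coeff_add[OF holP holR])
  also have "taylor_coeff R n = 0"
    unfolding R_def using taylor_coeff_power_mult_eq_0[OF hol\<phi> \<phi>0 holh\<phi>, of n "Suc j"] \<open>n \<le> j\<close>
    by (simp add: o_def del: power_Suc)
  finally show ?thesis
    unfolding P_def by (simp add: taylor_coeff_linear_combination holomorphic_intros hol\<phi> o_def)
qed

lemma norm_taylor_coeff_le:
  assumes holF: "F holomorphic_on ball 0 1" and \<rho>: "0 < \<rho>" "\<rho> < 1"
    and B: "\<And>z. norm z = \<rho> \<Longrightarrow> norm (F z) \<le> B"
  shows "norm (taylor_coeff F n) \<le> B / \<rho> ^ n"
proof -
  have "norm ((deriv ^^ n) F 0) \<le> fact n * B / \<rho> ^ n"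
    using \<rho> B by (intro Cauchy_inequality holomorphic_on_imp_continuous_on
                        holomorphic_on_subset[OF holF]) auto
  then have "norm ((deriv ^^ n) F 0) / fact n \<le> B / \<rho> ^ n"
    by (simp add: pos_divide_le_eq mult.commute)
  then show ?thesis
    by (simp add: taylor_coeff_def norm_divide)
qed

definition circle_mean_sq :: "real \<Rightarrow> (complex \<Rightarrow> complex) \<Rightarrow> real" where
  "circle_mean_sq r g = integral {0..1} (\<lambda>x. (cmod (g (of_real r * cis_turn x)))\<^sup>2)"

lemma circle_mean_sq_has_integral:
  assumes "g holomorphic_on ball 0 1" "0 \<le> r" "r < 1"
  shows "((\<lambda>x. (cmod (g (of_real r * cis_turn x)))\<^sup>2) has_integral circle_mean_sq r g) {0..1}"
proof -
  have "continuous_on {0..1} (\<lambda>x. g (of_real r * cis_turn x))"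
    using assms
    by (intro continuous_on_compose2[OF holomorphic_on_imp_continuous_on[OF assms(1)]]
              continuous_intros continuous_on_cis_turn) (auto simp: norm_mult)
  then show ?thesis
    unfolding circle_mean_sq_def by (intro integrable_integral integrable_continuous_interval continuous_intros)
qed

lemma circle_mean_sq_has_integral_complex:
  assumes "g holomorphic_on ball 0 1" "0 \<le> r" "r < 1"
  shows "((\<lambda>x. g (of_real r * cis_turn x) * cnj (g (of_real r * cis_turn x)))
           has_integral of_real (circle_mean_sq r g)) {0..1}"
  using has_integral_of_real[OF circle_mean_sq_has_integral[OF assms], where 'b=complex]
  by (simp only: complex_norm_square)

lemma has_integral_cmod_sq:
  assumes "((\<lambda>x. h x * cnj (h x)) has_integral of_real v) S"
  shows "((\<lambda>x. (cmod (h x))\<^sup>2) has_integral v) S"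
  using has_integral_linear[OF assms bounded_linear_Re]
  by (simp add: o_def complex_mult_cnj cmod_power2)

text \<open>Read off from the Cauchy formula for \<open>z\<^sup>m\<close> on the circle of radius \<open>1/2\<close>.\<close>
lemma cis_turn_orthonormal:
  "((\<lambda>x. cis_turn x ^ m * cnj (cis_turn x) ^ n) has_integral (if n = m then 1 else 0)) {0..1}"
proof -
  have "(\<lambda>z. z ^ m) holomorphic_on ball 0 1"
    by (intro holomorphic_intros)
  from taylor_coeff_has_integral_circle[OF this, of "1/2" n]
  have "((\<lambda>x. (of_real (1/2) * cis_turn x) ^ m * cnj (cis_turn x) ^ n)
          has_integral taylor_coeff (\<lambda>z. z ^ m) n * (1/2) ^ n) {0..1}"
    by simp
  from has_integral_mult_right[OF this, of "2 ^ m"] show ?thesis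
    by (cases "n = m") (simp_all add: taylor_coeff_power power_mult_distrib field_simps)
qed

lemma has_integral_mult_cnj_cis_turn_poly:
  fixes N :: nat
  assumes "\<And>n. n \<le> N \<Longrightarrow> ((\<lambda>x. G x * cnj (cis_turn x) ^ n) has_integral d n) {0..1}"
  shows "((\<lambda>x. G x * cnj (\<Sum>n\<le>N. c n * cis_turn x ^ n)) has_integral (\<Sum>n\<le>N. cnj (c n) * d n)) {0..1}"
proof -
  have "((\<lambda>x. \<Sum>n\<le>N. cnj (c n) * (G x * cnj (cis_turn x) ^ n)) has_integral (\<Sum>n\<le>N. cnj (c n) * d n)) {0..1}"
    using assms by (intro has_integral_sum has_integral_mult_right) auto
  moreover have "G x * cnj (\<Sum>n\<le>N. c n * cis_turn x ^ n) = (\<Sum>n\<le>N. cnj (c n) * (G x * cnj (cis_turn x) ^ n))" for x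
    by (simp add: sum_distrib_left mult_ac)
  ultimately show ?thesis
    by simp
qed

lemma fourier_coeff_cis_turn_poly:
  fixes N :: nat
  assumes "n \<le> N"
  shows "((\<lambda>x. (\<Sum>m\<le>N. c m * cis_turn x ^ m) * cnj (cis_turn x) ^ n) has_integral c n) {0..1}"
proof -
  have "((\<lambda>x. \<Sum>m\<le>N. c m * (cis_turn x ^ m * cnj (cis_turn x) ^ n))
          has_integral (\<Sum>m\<le>N. c m * (if n = m then 1 else 0))) {0..1}"
    by (intro has_integral_sum has_integral_mult_right cis_turn_orthonormal) auto
  moreover have "(\<Sum>m\<le>N. c m * cis_turn x ^ m) * cnj (cis_turn x) ^ n
                   = (\<Sum>m\<le>N. c m * (cis_turn x ^ m * cnj (cis_turn x) ^ n))" for x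
    by (simp add: sum_distrib_right mult.assoc)
  ultimately show ?thesis
    using assms by (simp add: if_distrib eq_commute[of n] cong: if_cong)
qed

text \<open>Expand \<open>0 \<le> \<integral> |g - P|\<^sup>2\<close>, where \<open>P\<close> is the Taylor polynomial of \<open>g\<close> on the circle of radius \<open>r\<close>.\<close>
lemma bessel_inequality_circle:
  assumes holg: "g holomorphic_on ball 0 1" and r: "0 < r" "r < 1"
  shows "(\<Sum>n\<le>N. (cmod (taylor_coeff g n))\<^sup>2 * r ^ (2 * n)) \<le> circle_mean_sq r g"
proof -
  define G where "G x = g (of_real r * cis_turn x)" for x
  define c where "c n = taylor_coeff g n * of_real r ^ n" for n
  define P where "P x = (\<Sum>n\<le>N. c n * cis_turn x ^ n)" for x
  define S where "S = (\<Sum>n\<le>N. (cmod (c n))\<^sup>2)"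
  have sumS: "(\<Sum>n\<le>N. cnj (c n) * c n) = of_real S"
    unfolding S_def of_real_sum by (intro sum.cong refl) (subst complex_norm_square, rule mult.commute)
  have GP: "((\<lambda>x. G x * cnj (P x)) has_integral of_real S) {0..1}"
    unfolding P_def sumS[symmetric] using taylor_coeff_has_integral_circle[OF holg r]
    by (intro has_integral_mult_cnj_cis_turn_poly) (simp add: G_def c_def)
  have PP: "((\<lambda>x. P x * cnj (P x)) has_integral of_real S) {0..1}"
    unfolding P_def sumS[symmetric]
    by (intro has_integral_mult_cnj_cis_turn_poly fourier_coeff_cis_turn_poly)
  have GG: "((\<lambda>x. G x * cnj (G x)) has_integral of_real (circle_mean_sq r g)) {0..1}"
    using circle_mean_sq_has_integral_complex[OF holg] r by (simp add: G_def)
  have PG: "((\<lambda>x. cnj (G x * cnj (P x))) has_integral of_real S) {0..1}"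
    using has_integral_linear[OF GP bounded_linear_cnj] by (simp add: o_def)
  have "((\<lambda>x. G x * cnj (G x) - G x * cnj (P x) - cnj (G x * cnj (P x)) + P x * cnj (P x))
          has_integral of_real (circle_mean_sq r g) - of_real S - of_real S + of_real S) {0..1}"
    by (intro has_integral_add has_integral_diff GP PP GG PG)
  then have "((\<lambda>x. (G x - P x) * cnj (G x - P x)) has_integral of_real (circle_mean_sq r g - S)) {0..1}"
    by (simp add: algebra_simps)
  then have "0 \<le> circle_mean_sq r g - S"
    by (rule has_integral_nonneg[OF has_integral_cmod_sq]) simp
  moreover have "S = (\<Sum>n\<le>N. (cmod (taylor_coeff g n))\<^sup>2 * r ^ (2 * n))"
    unfolding S_def c_def using r
    by (intro sum.cong refl) (simp add: norm_mult norm_power power_mult_distrib power_mult[symmetric] mult.commute)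
  ultimately show ?thesis
    by simp
qed

lemma circle_mean_sq_add_const:
  assumes holX: "X holomorphic_on ball 0 1" and X0: "X 0 = 0" and r: "0 < r" "r < 1"
  shows "circle_mean_sq r (\<lambda>z. a + X z) = (cmod a)\<^sup>2 + circle_mean_sq r X"
proof -
  define G where "G x = X (of_real r * cis_turn x)" for x
  have G: "(G has_integral 0) {0..1}"
    unfolding G_def using taylor_coeff_has_integral_circle[OF holX r, of 0] X0
    by (simp add: taylor_coeff_def)
  have cnjG: "((\<lambda>x. cnj (G x)) has_integral 0) {0..1}"
    using has_integral_linear[OF G bounded_linear_cnj] by (simp add: o_def)
  have GG: "((\<lambda>x. G x * cnj (G x)) has_integral of_real (circle_mean_sq r X)) {0..1}"
    using circle_mean_sq_has_integral_complex[OF holX] r by (simp add: G_def)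
  have const: "((\<lambda>x::real. a * cnj a) has_integral a * cnj a) {0..1}"
    using has_integral_const_real[of "a * cnj a" 0 1] by simp
  have "((\<lambda>x. a * cnj a + (a * cnj (G x) + (cnj a * G x + G x * cnj (G x)))) has_integral
          a * cnj a + (a * 0 + (cnj a * 0 + of_real (circle_mean_sq r X)))) {0..1}"
    by (intro has_integral_add[OF const] has_integral_add has_integral_mult_right cnjG G GG)
  then have "((\<lambda>x. (a + G x) * cnj (a + G x)) has_integral
               of_real ((cmod a)\<^sup>2 + circle_mean_sq r X)) {0..1}"
    by (simp add: algebra_simps complex_norm_square[of a, symmetric] del: of_real_power)
  from has_integral_cmod_sq[OF this] show ?thesis
    unfolding circle_mean_sq_def G_def by (rule integral_unique)
qed

lemma Schwarz_norm_le:
  assumes "\<phi> holomorphic_on ball 0 1" "\<phi> ` ball 0 1 \<subseteq> ball 0 1" "\<phi> 0 = 0" "norm w < 1"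
  shows "norm (\<phi> w) \<le> norm w"
proof (rule Schwarz_Lemma(1)[OF assms(1,3) _ assms(4)])
  show "norm (\<phi> z) < 1" if "norm z < 1" for z
    using assms(2) that by (auto simp: image_subset_iff)
qed

text \<open>Littlewood's subordination principle for polynomials in \<open>\<phi>\<close>, by induction on the degree:
  peel off the constant term, which is orthogonal to the rest, and use \<open>|\<phi>(z)| \<le> |z|\<close>.\<close>
lemma circle_mean_sq_poly_comp_le:
  fixes p :: "nat \<Rightarrow> complex"
  assumes hol\<phi>: "\<phi> holomorphic_on ball 0 1" and \<phi>_ball: "\<phi> ` ball 0 1 \<subseteq> ball 0 1"
    and \<phi>0: "\<phi> 0 = 0" and r: "0 < r" "r < 1"
  shows "circle_mean_sq r (\<lambda>z. \<Sum>k\<le>L. p k * \<phi> z ^ k) \<le> (\<Sum>k\<le>L. (cmod (p k))\<^sup>2 * r ^ (2 * k))"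
proof (induction L arbitrary: p)
  case 0
  show ?case
    by (simp add: circle_mean_sq_def)
next
  case (Suc L p)
  define Q where "Q z = (\<Sum>k\<le>L. p (Suc k) * \<phi> z ^ k)" for z
  have holQ: "Q holomorphic_on ball 0 1"
    unfolding Q_def by (intro holomorphic_intros hol\<phi>)
  have hol\<phi>Q: "(\<lambda>z. \<phi> z * Q z) holomorphic_on ball 0 1"
    by (intro holomorphic_intros hol\<phi> holQ)
  have "(\<lambda>z. \<Sum>k\<le>Suc L. p k * \<phi> z ^ k) = (\<lambda>z. p 0 + \<phi> z * Q z)"
    by (simp add: Q_def sum.atMost_Suc_shift sum_distrib_left mult_ac del: sum.atMost_Suc)
  then have "circle_mean_sq r (\<lambda>z. \<Sum>k\<le>Suc L. p k * \<phi> z ^ k) = (cmod (p 0))\<^sup>2 + circle_mean_sq r (\<lambda>z. \<phi> z * Q z)"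
    using circle_mean_sq_add_const[OF hol\<phi>Q _ r] \<phi>0 by simp
  also have "circle_mean_sq r (\<lambda>z. \<phi> z * Q z) \<le> integral {0..1} (\<lambda>x. r\<^sup>2 * (cmod (Q (of_real r * cis_turn x)))\<^sup>2)"
    unfolding circle_mean_sq_def
  proof (rule integral_le)
    show "(\<lambda>x. (cmod (\<phi> (of_real r * cis_turn x) * Q (of_real r * cis_turn x)))\<^sup>2) integrable_on {0..1}"
      using circle_mean_sq_has_integral[OF hol\<phi>Q, of r] r by (auto simp: integrable_on_def)
    show "(\<lambda>x. r\<^sup>2 * (cmod (Q (of_real r * cis_turn x)))\<^sup>2) integrable_on {0..1}"
      using has_integral_mult_right[OF circle_mean_sq_has_integral[OF holQ, of r], of "r\<^sup>2"] r
      by (auto simp: integrable_on_def)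
    fix x :: real
    have "norm (\<phi> (of_real r * cis_turn x)) \<le> r"
      using Schwarz_norm_le[OF hol\<phi> \<phi>_ball \<phi>0, of "of_real r * cis_turn x"] r by (simp add: norm_mult)
    then show "(cmod (\<phi> (of_real r * cis_turn x) * Q (of_real r * cis_turn x)))\<^sup>2
                 \<le> r\<^sup>2 * (cmod (Q (of_real r * cis_turn x)))\<^sup>2"
      by (simp add: norm_mult power_mult_distrib mult_right_mono power_mono)
  qed
  also have "\<dots> = r\<^sup>2 * circle_mean_sq r Q"
    by (simp add: circle_mean_sq_def)
  also have "\<dots> \<le> r\<^sup>2 * (\<Sum>k\<le>L. (cmod (p (Suc k)))\<^sup>2 * r ^ (2 * k))"
    using Suc.IH[of "\<lambda>k. p (Suc k)"] by (simp add: Q_def[abs_def] mult_left_mono)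
  finally show ?case
    by (simp add: sum.atMost_Suc_shift sum_distrib_left power_add mult_ac power2_eq_square del: sum.atMost_Suc)
qed

text \<open>Bessel's inequality on the circle of radius \<open>r\<close>, then \<open>r \<rightarrow> 1\<close>.\<close>
lemma sum_sq_taylor_coeff_poly_comp_le:
  fixes p :: "nat \<Rightarrow> complex"
  assumes hol\<phi>: "\<phi> holomorphic_on ball 0 1" and \<phi>_ball: "\<phi> ` ball 0 1 \<subseteq> ball 0 1" and \<phi>0: "\<phi> 0 = 0"
  shows "(\<Sum>n\<le>j. (cmod (taylor_coeff (\<lambda>z. \<Sum>k\<le>L. p k * \<phi> z ^ k) n))\<^sup>2) \<le> (\<Sum>k\<le>L. (cmod (p k))\<^sup>2)"
proof -
  define t where "t n = (cmod (taylor_coeff (\<lambda>z. \<Sum>k\<le>L. p k * \<phi> z ^ k) n))\<^sup>2" for n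
  have hol: "(\<lambda>z. \<Sum>k\<le>L. p k * \<phi> z ^ k) holomorphic_on ball 0 1"
    by (intro holomorphic_intros hol\<phi>)
  have "(\<Sum>n\<le>j. t n * r ^ (2 * n)) \<le> (\<Sum>k\<le>L. (cmod (p k))\<^sup>2)" if r: "0 < r" "r < 1" for r :: real
  proof -
    have "(\<Sum>n\<le>j. t n * r ^ (2 * n)) \<le> circle_mean_sq r (\<lambda>z. \<Sum>k\<le>L. p k * \<phi> z ^ k)"
      unfolding t_def by (rule bessel_inequality_circle[OF hol r])
    also have "\<dots> \<le> (\<Sum>k\<le>L. (cmod (p k))\<^sup>2 * r ^ (2 * k))"
      by (rule circle_mean_sq_poly_comp_le[OF hol\<phi> \<phi>_ball \<phi>0 r])
    also have "\<dots> \<le> (\<Sum>k\<le>L. (cmod (p k))\<^sup>2)"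
      by (intro sum_mono mult_left_le power_le_one) (use r in auto)
    finally show ?thesis .
  qed
  then have "eventually (\<lambda>r. (\<Sum>n\<le>j. t n * r ^ (2 * n)) \<le> (\<Sum>k\<le>L. (cmod (p k))\<^sup>2)) (at_left (1::real))"
    using eventually_at_left_real[of 0 "1::real"] by (rule eventually_mono[rotated]) auto
  moreover have "((\<lambda>r. \<Sum>n\<le>j. t n * r ^ (2 * n)) \<longlongrightarrow> (\<Sum>n\<le>j. t n * 1 ^ (2 * n))) (at_left (1::real))"
    by (intro tendsto_intros)
  ultimately have "(\<Sum>n\<le>j. t n * 1 ^ (2 * n)) \<le> (\<Sum>k\<le>L. (cmod (p k))\<^sup>2)"
    by (intro tendsto_upperbound) auto
  then show ?thesis
    by (simp add: t_def)
qed

lemma norm_add_sq_le: "(norm (x + y))\<^sup>2 \<le> 2 * (norm x)\<^sup>2 + 2 * (norm y)\<^sup>2"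
proof -
  have "(norm (x + y))\<^sup>2 \<le> (norm x + norm y)\<^sup>2"
    by (intro power_mono norm_triangle_ineq) auto
  also have "\<dots> \<le> 2 * (norm x)\<^sup>2 + 2 * (norm y)\<^sup>2"
    using sum_squares_bound[of "norm x" "norm y"] by (simp add: power2_eq_square algebra_simps)
  finally show ?thesis .
qed

lemma sum_sq_norm_sum_mult_le:
  fixes q :: "nat \<Rightarrow> complex" and t :: "nat \<Rightarrow> nat \<Rightarrow> complex"
  assumes "\<And>n k. n \<le> j \<Longrightarrow> k \<le> j \<Longrightarrow> q k \<noteq> 0 \<Longrightarrow> (real j + 1) * norm (t n k) \<le> B k"
  shows "(\<Sum>n\<le>j. (norm (\<Sum>k\<le>j. q k * t n k))\<^sup>2) \<le> (\<Sum>k\<le>j. (norm (q k))\<^sup>2 * (B k)\<^sup>2)"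
proof -
  have "(norm (\<Sum>k\<le>j. q k * t n k))\<^sup>2 \<le> (\<Sum>k\<le>j. (norm (q k))\<^sup>2 * (B k)\<^sup>2) / (real j + 1)"
    if "n \<le> j" for n
  proof -
    have "norm (q k * t n k) \<le> norm (q k) * B k / (real j + 1)" if "k \<le> j" for k
    proof (cases "q k = 0")
      case False
      from mult_left_mono[OF assms[OF \<open>n \<le> j\<close> that False], of "norm (q k)"]
      show ?thesis
        by (simp add: pos_le_divide_eq norm_mult mult_ac)
    qed simp
    then have "norm (\<Sum>k\<le>j. q k * t n k) \<le> (\<Sum>k\<le>j. norm (q k) * B k / (real j + 1))"
      by (intro norm_sum[THEN order_trans] sum_mono) auto
    then have "(norm (\<Sum>k\<le>j. q k * t n k))\<^sup>2 \<le> (\<Sum>k\<le>j. norm (q k) * B k / (real j + 1))\<^sup>2"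
      by (intro power_mono) auto
    also have "\<dots> \<le> (\<Sum>k\<le>j. (norm (q k) * B k / (real j + 1))\<^sup>2) * real (card {..j})"
      by (rule sum_squared_le_sum_of_squares)
    also have "\<dots> = (\<Sum>k\<le>j. (norm (q k))\<^sup>2 * (B k)\<^sup>2) / (real j + 1)\<^sup>2 * (real j + 1)"
      by (simp add: power_divide power_mult_distrib sum_divide_distrib add.commute)
    also have "\<dots> = (\<Sum>k\<le>j. (norm (q k))\<^sup>2 * (B k)\<^sup>2) / (real j + 1)"
      by (simp add: power2_eq_square)
    finally show ?thesis .
  qed
  then have "(\<Sum>n\<le>j. (norm (\<Sum>k\<le>j. q k * t n k))\<^sup>2)
               \<le> (\<Sum>n\<le>j. (\<Sum>k\<le>j. (norm (q k))\<^sup>2 * (B k)\<^sup>2) / (real j + 1))"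
    by (intro sum_mono) auto
  then show ?thesis
    by (simp add: add.commute)
qed

text \<open>Split \<open>f\<close> at the degree \<open>j / (1 + \<delta>)\<close>: the low-degree part is controlled by Littlewood's
  principle, the high-degree part by the coefficient estimate \<open>tb\<close> for the powers of \<open>\<phi>\<close>.\<close>
lemma sum_sq_taylor_coeff_comp_le:
  assumes holf: "f holomorphic_on ball 0 1" and hol\<phi>: "\<phi> holomorphic_on ball 0 1"
    and \<phi>_ball: "\<phi> ` ball 0 1 \<subseteq> ball 0 1" and \<phi>0: "\<phi> 0 = 0"
    and tb: "\<And>n k. real n \<le> (1 + \<delta>) * real k \<Longrightarrow> norm (taylor_coeff (\<lambda>z. \<phi> z ^ k) n) \<le> \<theta> ^ k"
  shows "(\<Sum>n\<le>j. (norm (taylor_coeff (f \<circ> \<phi>) n))\<^sup>2) \<le>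
    (\<Sum>k\<le>j. (norm (taylor_coeff f k))\<^sup>2 *
       (if (1 + \<delta>) * real k < real j then 2 else 2 * (((1 + \<delta>) * real k + 1)\<^sup>2 * \<theta> ^ (2 * k))))"
proof -
  define a where "a k = taylor_coeff f k" for k
  define low where "low k \<longleftrightarrow> (1 + \<delta>) * real k < real j" for k
  define e where "e k = ((1 + \<delta>) * real k + 1)\<^sup>2 * \<theta> ^ (2 * k)" for k
  define p where "p k = (if low k then a k else 0)" for k
  define q where "q k = (if low k then 0 else a k)" for k
  define t where "t n k = taylor_coeff (\<lambda>z. \<phi> z ^ k) n" for n k
  define c where "c n = taylor_coeff (\<lambda>z. \<Sum>k\<le>j. p k * \<phi> z ^ k) n" for n
  define d where "d n = (\<Sum>k\<le>j. q k * t n k)" for n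
  have pq: "p k + q k = a k" for k
    by (simp add: p_def q_def)
  have split: "taylor_coeff (f \<circ> \<phi>) n = c n + d n" if "n \<le> j" for n
  proof -
    have "taylor_coeff (f \<circ> \<phi>) n = (\<Sum>k\<le>j. (p k + q k) * t n k)"
      unfolding t_def pq a_def by (rule taylor_coeff_comp_eq_sum[OF holf hol\<phi> \<phi>_ball \<phi>0 that])
    then show ?thesis
      by (simp add: c_def d_def t_def taylor_coeff_linear_combination holomorphic_intros hol\<phi>
                    distrib_right sum.distrib)
  qed
  have low_part: "(\<Sum>n\<le>j. (norm (c n))\<^sup>2) \<le> (\<Sum>k\<le>j. (norm (p k))\<^sup>2)"
    unfolding c_def by (rule sum_sq_taylor_coeff_poly_comp_le[OF hol\<phi> \<phi>_ball \<phi>0])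
  have "(\<Sum>n\<le>j. (norm (d n))\<^sup>2) \<le> (\<Sum>k\<le>j. (norm (q k))\<^sup>2 * (((1 + \<delta>) * real k + 1) * \<theta> ^ k)\<^sup>2)"
    unfolding d_def
  proof (rule sum_sq_norm_sum_mult_le)
    fix n k assume "n \<le> j" "q k \<noteq> 0"
    then have "real j \<le> (1 + \<delta>) * real k"
      by (auto simp: q_def low_def split: if_splits)
    moreover from this \<open>n \<le> j\<close> have "norm (t n k) \<le> \<theta> ^ k"
      unfolding t_def by (intro tb) linarith
    ultimately show "(real j + 1) * norm (t n k) \<le> ((1 + \<delta>) * real k + 1) * \<theta> ^ k"
      by (intro mult_mono) auto
  qed
  also have "\<dots> = (\<Sum>k\<le>j. (norm (q k))\<^sup>2 * e k)"
    by (simp add: e_def power_mult_distrib power_mult mult.commute[of 2])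
  finally have high_part: "(\<Sum>n\<le>j. (norm (d n))\<^sup>2) \<le> (\<Sum>k\<le>j. (norm (q k))\<^sup>2 * e k)" .
  have "(\<Sum>n\<le>j. (norm (taylor_coeff (f \<circ> \<phi>) n))\<^sup>2) \<le> (\<Sum>n\<le>j. 2 * (norm (c n))\<^sup>2 + 2 * (norm (d n))\<^sup>2)"
    by (intro sum_mono) (simp add: split norm_add_sq_le)
  also have "\<dots> \<le> 2 * (\<Sum>k\<le>j. (norm (p k))\<^sup>2) + 2 * (\<Sum>k\<le>j. (norm (q k))\<^sup>2 * e k)"
    using low_part high_part by (simp add: sum.distrib sum_distrib_left[symmetric])
  also have "\<dots> = (\<Sum>k\<le>j. (norm (a k))\<^sup>2 * (if low k then 2 else 2 * e k))"
    by (simp add: sum_distrib_left sum.distrib[symmetric] p_def q_def) (intro sum.cong refl, simp)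
  finally show ?thesis
    unfolding a_def low_def e_def .
qed

text \<open>Zero beyond \<open>N\<close>, so that the boundary term of summation by parts vanishes.\<close>
definition decr_majorant :: "(nat \<Rightarrow> real) \<Rightarrow> nat \<Rightarrow> nat \<Rightarrow> real" where
  "decr_majorant \<beta> N n = (if n \<le> N then Max (\<beta> ` {n..N}) else 0)"

lemma le_decr_majorant: "n \<le> N \<Longrightarrow> \<beta> n \<le> decr_majorant \<beta> N n"
  by (auto simp: decr_majorant_def intro!: Max_ge)

lemma decr_majorant_attained:
  assumes "n \<le> N"
  obtains m where "m \<in> {n..N}" "decr_majorant \<beta> N n = \<beta> m"
proof -
  have "Max (\<beta> ` {n..N}) \<in> \<beta> ` {n..N}"
    using assms by (intro Max_in) auto
  then obtain m where "m \<in> {n..N}" "Max (\<beta> ` {n..N}) = \<beta> m"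
    by blast
  with assms that show ?thesis
    by (simp add: decr_majorant_def)
qed

lemma decr_majorant_nonneg:
  assumes "\<And>n. 0 \<le> \<beta> n"
  shows "0 \<le> decr_majorant \<beta> N n"
proof (cases "n \<le> N")
  case True
  then show ?thesis
    using assms[of n] le_decr_majorant[OF True, of \<beta>] by linarith
qed (simp add: decr_majorant_def)

lemma decr_majorant_Suc_le:
  assumes "\<And>n. 0 \<le> \<beta> n"
  shows "decr_majorant \<beta> N (Suc n) \<le> decr_majorant \<beta> N n"
proof (cases "Suc n \<le> N")
  case True
  then show ?thesis
    by (auto simp: decr_majorant_def intro!: Max_mono)
next
  case False
  then show ?thesis
    using decr_majorant_nonneg[of \<beta> N n, OF assms] by (simp add: decr_majorant_def)
qed

lemma decr_majorant_le:
  assumes "\<And>n. \<beta> n \<le> M" "\<And>n. 0 \<le> \<beta> n"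
  shows "decr_majorant \<beta> N n \<le> M"
proof (cases "n \<le> N")
  case True
  then show ?thesis
    using assms(1) by (metis decr_majorant_attained)
next
  case False
  then show ?thesis
    using order_trans[OF assms(2,1)] by (simp add: decr_majorant_def)
qed

lemma sum_decr_majorant_diff:
  assumes "a \<le> Suc N"
  shows "(\<Sum>j=a..N. decr_majorant \<beta> N j - decr_majorant \<beta> N (Suc j)) = decr_majorant \<beta> N a"
proof -
  have "decr_majorant \<beta> N (Suc N) = 0"
    by (simp add: decr_majorant_def)
  then show ?thesis
    using sum_Suc_diff[OF assms, of "\<lambda>j. - decr_majorant \<beta> N j"] by simp
qed

lemma summation_by_parts_atMost:
  fixes b x :: "nat \<Rightarrow> real"
  shows "(\<Sum>n\<le>N. b n * x n) = b (Suc N) * (\<Sum>n\<le>N. x n) + (\<Sum>j\<le>N. (b j - b (Suc j)) * (\<Sum>n\<le>j. x n))"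
  by (induction N) (simp_all add: algebra_simps)

lemma sum_atMost_triangle_swap:
  fixes N :: nat
  shows "(\<Sum>j\<le>N. \<Sum>k\<le>j. F j k) = (\<Sum>k\<le>N. \<Sum>j=k..N. F j k)"
proof -
  have "(\<Sum>j\<le>N. \<Sum>k\<le>j. F j k) = (\<Sum>j\<le>N. \<Sum>k\<in>{k. k \<in> {..N} \<and> k \<le> j}. F j k)"
    by (intro sum.cong) auto
  also have "\<dots> = (\<Sum>k\<le>N. \<Sum>j\<in>{j. j \<in> {..N} \<and> k \<le> j}. F j k)"
    by (rule sum.swap_restrict) auto
  also have "\<dots> = (\<Sum>k\<le>N. \<Sum>j=k..N. F j k)"
    by (intro sum.cong) auto
  finally show ?thesis .
qed

lemma sum_decr_majorant_diff_beyond_le: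
  assumes \<beta>: "\<And>n. 0 \<le> \<beta> n" and "0 \<le> C"
    and C: "\<And>m. \<sigma> * real k < real m \<Longrightarrow> \<beta> m \<le> C * \<beta> k"
  shows "(\<Sum>j\<in>{j\<in>{k..N}. \<sigma> * real k < real j}. decr_majorant \<beta> N j - decr_majorant \<beta> N (Suc j))
           \<le> C * \<beta> k"
    (is "(\<Sum>j\<in>?S. _) \<le> _")
proof (cases "?S = {}")
  case True
  have "0 \<le> C * \<beta> k"
    using \<open>0 \<le> C\<close> \<beta>[of k] by simp
  then show ?thesis
    by (simp only: True sum.empty)
next
  case False
  define j0 where "j0 = Min ?S"
  have j0: "j0 \<in> ?S"
    using False unfolding j0_def by (intro Min_in) auto
  then have "?S = {j0..N}"
    by (auto simp: j0_def intro: less_le_trans[of _ "real j0"])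
  moreover obtain m where m: "m \<in> {j0..N}" "decr_majorant \<beta> N j0 = \<beta> m"
    using j0 decr_majorant_attained[of j0 N \<beta>] by auto
  moreover have "\<sigma> * real k < real m"
    using m(1) j0 by auto
  ultimately show ?thesis
    using j0 C sum_decr_majorant_diff[of j0 N \<beta>] by simp
qed

lemma sum_decr_majorant_diff_weighted_le:
  fixes \<beta> e :: "nat \<Rightarrow> real"
  assumes \<beta>: "\<And>n. 0 \<le> \<beta> n" and M: "\<And>n. \<beta> n \<le> M" and "0 \<le> e k"
    and "0 \<le> C" and C: "\<And>m. \<sigma> * real k < real m \<Longrightarrow> \<beta> m \<le> C * \<beta> k"
    and D: "e k \<le> D * \<beta> k" and "k \<le> N"
  shows "(\<Sum>j=k..N. (decr_majorant \<beta> N j - decr_majorant \<beta> N (Suc j)) *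
            (if \<sigma> * real k < real j then 2 else 2 * e k)) \<le> (2 * C + 2 * M * D) * \<beta> k"
proof -
  define b where "b = decr_majorant \<beta> N"
  define w where "w j = b j - b (Suc j)" for j
  have w: "0 \<le> w j" for j
    using decr_majorant_Suc_le[OF \<beta>] by (simp add: w_def b_def)
  have "(\<Sum>j=k..N. w j * (if \<sigma> * real k < real j then 2 else 2 * e k))
          \<le> (\<Sum>j=k..N. (if \<sigma> * real k < real j then 2 * w j else 0) + 2 * e k * w j)"
    using w \<open>0 \<le> e k\<close> by (intro sum_mono) auto
  also have "\<dots> = 2 * (\<Sum>j\<in>{j\<in>{k..N}. \<sigma> * real k < real j}. w j) + 2 * e k * (\<Sum>j=k..N. w j)"
    by (simp add: sum.distrib sum_distrib_left flip: sum.inter_filter)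
  also have "\<dots> \<le> 2 * (C * \<beta> k) + 2 * e k * b k"
    using sum_decr_majorant_diff_beyond_le[where k=k and N=N and \<sigma>=\<sigma> and \<beta>=\<beta>, OF \<beta> \<open>0 \<le> C\<close> C]
      sum_decr_majorant_diff[of k N \<beta>] \<open>k \<le> N\<close>
    by (simp add: w_def b_def)
  also have "\<dots> \<le> (2 * C + 2 * M * D) * \<beta> k"
  proof -
    have "e k * b k \<le> D * \<beta> k * M"
      using D \<open>0 \<le> e k\<close> decr_majorant_le[OF M \<beta>] decr_majorant_nonneg[OF \<beta>]
      by (intro mult_mono) (auto simp: b_def intro: order_trans)
    then show ?thesis
      by (simp add: algebra_simps)
  qed
  finally show ?thesis
    by (simp add: w_def b_def)
qed

text \<open>Abel summation against the decreasing majorant of \<open>\<beta>\<close> turns bounds on the partial sums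
  of \<open>x\<close> into a bound on \<open>\<Sum> \<beta>\<^sub>n x\<^sub>n\<close>; the growth condition absorbs the indices \<open>j > \<sigma> k\<close>.\<close>
lemma weighted_sum_le_of_partial_sums:
  fixes \<beta> A x e :: "nat \<Rightarrow> real"
  assumes \<beta>: "\<And>n. 0 \<le> \<beta> n" and M: "\<And>n. \<beta> n \<le> M"
    and A: "\<And>k. 0 \<le> A k" and x: "\<And>n. 0 \<le> x n" and e: "\<And>k. 0 \<le> e k"
    and "0 \<le> C" and C: "\<And>m k. \<sigma> * real k < real m \<Longrightarrow> \<beta> m \<le> C * \<beta> k"
    and D: "\<And>k. e k \<le> D * \<beta> k"
    and partial: "\<And>j. (\<Sum>n\<le>j. x n) \<le> (\<Sum>k\<le>j. A k * (if \<sigma> * real k < real j then 2 else 2 * e k))"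
  shows "(\<Sum>n\<le>N. \<beta> n * x n) \<le> (2 * C + 2 * M * D) * (\<Sum>k\<le>N. \<beta> k * A k)"
proof -
  define b where "b = decr_majorant \<beta> N"
  define w where "w j = b j - b (Suc j)" for j
  define g where "g j k = (if \<sigma> * real k < real j then 2 else 2 * e k)" for j k
  have "(\<Sum>n\<le>N. \<beta> n * x n) \<le> (\<Sum>n\<le>N. b n * x n)"
    unfolding b_def by (intro sum_mono mult_right_mono le_decr_majorant x) auto
  also have "\<dots> = (\<Sum>j\<le>N. w j * (\<Sum>n\<le>j. x n))"
    using summation_by_parts_atMost[of b x N] by (simp add: w_def b_def decr_majorant_def)
  also have "\<dots> \<le> (\<Sum>j\<le>N. \<Sum>k\<le>j. A k * (w j * g j k))"
  proof (intro sum_mono)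
    fix j
    have "w j * (\<Sum>n\<le>j. x n) \<le> w j * (\<Sum>k\<le>j. A k * g j k)"
      using partial[of j] decr_majorant_Suc_le[OF \<beta>]
      by (intro mult_left_mono) (auto simp: g_def w_def b_def)
    then show "w j * (\<Sum>n\<le>j. x n) \<le> (\<Sum>k\<le>j. A k * (w j * g j k))"
      by (simp add: sum_distrib_left mult.left_commute)
  qed
  also have "\<dots> = (\<Sum>k\<le>N. A k * (\<Sum>j=k..N. w j * g j k))"
    by (simp add: sum_atMost_triangle_swap sum_distrib_left)
  also have "\<dots> \<le> (\<Sum>k\<le>N. A k * ((2 * C + 2 * M * D) * \<beta> k))"
    unfolding w_def b_def g_def
    by (intro sum_mono mult_left_mono A sum_decr_majorant_diff_weighted_le \<beta> M e \<open>0 \<le> C\<close> C D) auto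
  also have "\<dots> = (2 * C + 2 * M * D) * (\<Sum>k\<le>N. \<beta> k * A k)"
    unfolding sum_distrib_left by (simp add: mult_ac)
  finally show ?thesis .
qed

lemma norm_taylor_coeff_power_le:
  assumes hol\<phi>: "\<phi> holomorphic_on ball 0 1" and \<rho>: "0 < \<rho>" "\<rho> < 1"
    and bound: "\<And>z. norm z = \<rho> \<Longrightarrow> norm (\<phi> z) \<le> m" and "0 \<le> m"
    and n: "real n \<le> \<sigma> * real k"
  shows "norm (taylor_coeff (\<lambda>z. \<phi> z ^ k) n) \<le> (m / \<rho> powr \<sigma>) ^ k"
proof -
  have "norm (taylor_coeff (\<lambda>z. \<phi> z ^ k) n) \<le> m ^ k / \<rho> ^ n"
    using \<rho> bound \<open>0 \<le> m\<close>
    by (intro norm_taylor_coeff_le holomorphic_intros hol\<phi>) (auto simp: norm_power intro: power_mono)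
  also have "\<dots> \<le> m ^ k / (\<rho> powr \<sigma>) ^ k"
  proof (intro divide_left_mono)
    have "(\<rho> powr \<sigma>) ^ k = \<rho> powr (\<sigma> * real k)"
      using \<rho> by (simp add: powr_realpow[symmetric] powr_powr)
    also have "\<dots> \<le> \<rho> powr real n"
      using \<rho> n by (intro powr_mono') auto
    finally show "\<rho> ^ n \<ge> (\<rho> powr \<sigma>) ^ k"
      using \<rho> by (simp add: powr_realpow)
  qed (use \<rho> \<open>0 \<le> m\<close> in auto)
  finally show ?thesis
    by (simp add: power_divide)
qed

lemma decay_poly_geometric:
  fixes \<theta> \<delta> \<alpha> :: real
  assumes "0 < \<theta>" "\<theta> < 1" "0 < \<delta>"
  shows "(\<lambda>k. ((1 + \<delta>) * real k + 1)\<^sup>2 * \<theta> ^ (2 * k) * real k powr \<alpha>) \<longlonglongrightarrow> 0"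
proof -
  have "0 < \<theta>\<^sup>2" "\<theta>\<^sup>2 < 1"
    using assms by (auto simp: power_less_one_iff)
  with \<open>0 < \<delta>\<close> have "(\<lambda>k. ((1 + \<delta>) * real k + 1)\<^sup>2 * (\<theta>\<^sup>2) ^ k * real k powr \<alpha>) \<longlonglongrightarrow> 0"
    by real_asymp
  then show ?thesis
    by (simp add: power_mult)
qed

lemma le_mult_of_polynomial_minoration:
  fixes \<beta> e :: "nat \<Rightarrow> real"
  assumes pos: "\<And>n. 0 < \<beta> n" and minor: "polynomial_minoration \<beta>" and e: "\<And>k. 0 \<le> e k"
    and decay: "\<And>\<alpha>. (\<lambda>k. e k * real k powr \<alpha>) \<longlonglongrightarrow> 0"
  obtains D where "0 \<le> D" "\<And>k. e k \<le> D * \<beta> k"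
proof -
  obtain c \<alpha> where c: "0 < c" and minor: "\<And>n. 1 \<le> n \<Longrightarrow> c * real n powr (- \<alpha>) \<le> \<beta> n"
    using minor unfolding polynomial_minoration_def by blast
  have "Bseq (\<lambda>k. e k * real k powr \<alpha>)"
    using decay by (intro convergent_imp_Bseq convergentI)
  then obtain K where K: "0 < K" "\<And>k. norm (e k * real k powr \<alpha>) \<le> K"
    by (auto elim!: BseqE)
  define D where "D = K / c + e 0 / \<beta> 0"
  have "0 \<le> K / c" "0 \<le> e 0 / \<beta> 0"
    using K c e pos[of 0] by auto
  moreover have "e k \<le> D * \<beta> k" for k
  proof (cases "k = 0")
    case True
    then show ?thesis
      using pos[of 0] K c by (simp add: D_def distrib_right)
  next
    case False
    then have "e k * real k powr \<alpha> \<le> K"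
      using K(2)[of k] e[of k] by simp
    then have "e k \<le> K * real k powr (- \<alpha>)"
      using False by (simp add: powr_minus field_simps)
    also have "\<dots> \<le> K * (\<beta> k / c)"
      using minor[of k] False c K by (intro mult_left_mono) (auto simp: field_simps)
    also have "\<dots> \<le> D * \<beta> k"
      using pos[of k] pos[of 0] e[of 0] by (simp add: D_def distrib_right)
    finally show ?thesis .
  qed
  ultimately show ?thesis
    using that[of D] by (simp add: D_def)
qed

lemma comp_op_boundedI:
  assumes hol\<phi>: "\<phi> holomorphic_on ball 0 1" and \<phi>_ball: "\<phi> ` ball 0 1 \<subseteq> ball 0 1"
    and \<beta>: "\<And>n. 0 \<le> \<beta> n" and "0 \<le> K"
    and partial: "\<And>f N. f \<in> H2 \<beta> \<Longrightarrow>
      (\<Sum>n\<le>N. (norm (taylor_coeff (f \<circ> \<phi>) n))\<^sup>2 * \<beta> n) \<le> K * (\<Sum>n\<le>N. (norm (taylor_coeff f n))\<^sup>2 * \<beta> n)"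
  shows "comp_op_bounded \<beta> \<phi>"
proof -
  have "f \<circ> \<phi> \<in> H2 \<beta> \<and> H2_norm \<beta> (f \<circ> \<phi>) \<le> sqrt K * H2_norm \<beta> f" if f: "f \<in> H2 \<beta>" for f
  proof -
    have holf: "f holomorphic_on ball 0 1" and sf: "summable (\<lambda>n. (norm (taylor_coeff f n))\<^sup>2 * \<beta> n)"
      using f by (auto simp: H2_def)
    define S where "S = (\<Sum>n. (norm (taylor_coeff f n))\<^sup>2 * \<beta> n)"
    have "(\<Sum>n<N. (norm (taylor_coeff (f \<circ> \<phi>) n))\<^sup>2 * \<beta> n) \<le> K * S" for N
    proof (cases N)
      case (Suc N')
      have "(\<Sum>n\<le>N'. (norm (taylor_coeff f n))\<^sup>2 * \<beta> n) \<le> S"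
        unfolding S_def using \<beta> by (intro sum_le_suminf[OF sf]) auto
      then show ?thesis
        using partial[OF f, of N'] mult_left_mono[OF _ \<open>0 \<le> K\<close>] Suc
        by (fastforce simp: lessThan_Suc_atMost)
    qed (use \<open>0 \<le> K\<close> \<beta> sf in \<open>simp add: S_def suminf_nonneg\<close>)
    note bound = this
    have "summable (\<lambda>n. (norm (taylor_coeff (f \<circ> \<phi>) n))\<^sup>2 * \<beta> n)"
      using \<beta> by (intro summableI_nonneg_bounded[OF _ bound]) simp
    moreover from suminf_le_const[OF this bound]
    have "(\<Sum>n. (norm (taylor_coeff (f \<circ> \<phi>) n))\<^sup>2 * \<beta> n) \<le> K * S" .
    moreover have "(f \<circ> \<phi>) holomorphic_on ball 0 1"
      by (rule holomorphic_on_compose_gen[OF hol\<phi> holf \<phi>_ball])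
    ultimately show ?thesis
      by (simp add: H2_def H2_norm_def S_def flip: real_sqrt_mult)
  qed
  then show ?thesis
    unfolding comp_op_bounded_def by blast
qed

lemma comp_op_bounded_rotation:
  assumes rot: "\<And>z. norm z < 1 \<Longrightarrow> \<phi> z = \<alpha> * z" and "norm \<alpha> = 1" and \<beta>: "\<And>n. 0 \<le> \<beta> n"
  shows "comp_op_bounded \<beta> \<phi>"
proof (rule comp_op_boundedI[where K=1])
  show hol\<phi>: "\<phi> holomorphic_on ball 0 1"
    by (rule holomorphic_transform[of "\<lambda>z. \<alpha> * z"]) (auto simp: rot)
  show \<phi>_ball: "\<phi> ` ball 0 1 \<subseteq> ball 0 1"
    using rot \<open>norm \<alpha> = 1\<close> by (auto simp: norm_mult)
  fix f N assume "f \<in> H2 \<beta>"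
  then have holf: "f holomorphic_on ball 0 1"
    by (simp add: H2_def)
  have "taylor_coeff (f \<circ> \<phi>) n = \<alpha> ^ n * taylor_coeff f n" for n
  proof -
    have hol: "(f \<circ> \<phi>) holomorphic_on ball 0 1"
      by (rule holomorphic_on_compose_gen[OF hol\<phi> holf \<phi>_ball])
    then have "(\<lambda>w. f (\<alpha> * w)) holomorphic_on ball 0 1"
      by (rule holomorphic_transform) (simp add: rot)
    with hol have "taylor_coeff (f \<circ> \<phi>) n = taylor_coeff (\<lambda>w. f (\<alpha> * w)) n"
      by (rule taylor_coeff_cong) (simp add: rot)
    also have "(deriv ^^ n) (\<lambda>w. f (\<alpha> * w)) 0 = \<alpha> ^ n * (deriv ^^ n) f (\<alpha> * 0)"
      using \<open>norm \<alpha> = 1\<close> by (intro higher_deriv_compose_linear[OF holf, where S="ball 0 1"]) (auto simp: norm_mult)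
    then have "taylor_coeff (\<lambda>w. f (\<alpha> * w)) n = \<alpha> ^ n * taylor_coeff f n"
      by (simp add: taylor_coeff_def)
    finally show ?thesis .
  qed
  then show "(\<Sum>n\<le>N. (norm (taylor_coeff (f \<circ> \<phi>) n))\<^sup>2 * \<beta> n) \<le> 1 * (\<Sum>n\<le>N. (norm (taylor_coeff f n))\<^sup>2 * \<beta> n)"
    using \<open>norm \<alpha> = 1\<close> by (simp add: norm_mult norm_power)
qed (use \<beta> in auto)

lemma comp_op_bounded_contraction:
  fixes \<beta> :: "nat \<Rightarrow> real" and m :: real
  assumes pos: "\<And>n. 0 < \<beta> n" and M: "\<And>n. \<beta> n \<le> M" and minor: "polynomial_minoration \<beta>"
    and growth: "\<forall>\<delta>>0. \<exists>C>0. \<forall>m n. real m > (1 + \<delta>) * real n \<longrightarrow> \<beta> m \<le> C * \<beta> n"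
    and hol\<phi>: "\<phi> holomorphic_on ball 0 1" and \<phi>_ball: "\<phi> ` ball 0 1 \<subseteq> ball 0 1" and \<phi>0: "\<phi> 0 = 0"
    and m: "0 < m" "m < 1/2" and bound: "\<And>z. norm z = 1/2 \<Longrightarrow> norm (\<phi> z) \<le> m"
  shows "comp_op_bounded \<beta> \<phi>"
proof -
  define \<delta> where "\<delta> = log 2 (2 / (1 + 2 * m))"
  define \<theta> where "\<theta> = m / (1/2) powr (1 + \<delta>)"
  have "0 < \<delta>"
    using m unfolding \<delta>_def by (subst zero_less_log_cancel_iff) auto
  have \<theta>_eq: "\<theta> = 4 * m / (1 + 2 * m)"
    using m by (simp add: \<theta>_def \<delta>_def powr_add powr_divide field_simps)
  have \<theta>: "0 < \<theta>" "\<theta> < 1"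
    using m unfolding \<theta>_eq by (simp_all add: divide_less_eq)
  have tb: "norm (taylor_coeff (\<lambda>z. \<phi> z ^ k) n) \<le> \<theta> ^ k" if "real n \<le> (1 + \<delta>) * real k" for n k
    unfolding \<theta>_def using m that by (intro norm_taylor_coeff_power_le[OF hol\<phi> _ _ bound]) auto
  obtain C where "0 < C" and C: "\<And>m n. (1 + \<delta>) * real n < real m \<Longrightarrow> \<beta> m \<le> C * \<beta> n"
    using growth \<open>0 < \<delta>\<close> by blast
  define e where "e k = ((1 + \<delta>) * real k + 1)\<^sup>2 * \<theta> ^ (2 * k)" for k
  obtain D where "0 \<le> D" and D: "\<And>k. e k \<le> D * \<beta> k"
    using le_mult_of_polynomial_minoration[OF pos minor, of e] decay_poly_geometric[OF \<theta> \<open>0 < \<delta>\<close>] \<theta>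
    unfolding e_def by auto
  have "0 \<le> M"
    using M[of 0] pos[of 0] by simp
  show ?thesis
  proof (rule comp_op_boundedI[OF hol\<phi> \<phi>_ball, where K="2 * C + 2 * M * D"])
    fix f N assume "f \<in> H2 \<beta>"
    then have "(\<Sum>n\<le>j. (norm (taylor_coeff (f \<circ> \<phi>) n))\<^sup>2) \<le>
                 (\<Sum>k\<le>j. (norm (taylor_coeff f k))\<^sup>2 * (if (1 + \<delta>) * real k < real j then 2 else 2 * e k))"
      for j
      unfolding e_def H2_def by (intro sum_sq_taylor_coeff_comp_le[OF _ hol\<phi> \<phi>_ball \<phi>0 tb]) auto
    then have "(\<Sum>n\<le>N. \<beta> n * (norm (taylor_coeff (f \<circ> \<phi>) n))\<^sup>2)
                 \<le> (2 * C + 2 * M * D) * (\<Sum>k\<le>N. \<beta> k * (norm (taylor_coeff f k))\<^sup>2)"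
      using pos \<open>0 < C\<close> \<theta> by (intro weighted_sum_le_of_partial_sums[OF _ M _ _ _ _ C D]) (auto simp: e_def less_imp_le)
    then show "(\<Sum>n\<le>N. (norm (taylor_coeff (f \<circ> \<phi>) n))\<^sup>2 * \<beta> n)
                 \<le> (2 * C + 2 * M * D) * (\<Sum>n\<le>N. (norm (taylor_coeff f n))\<^sup>2 * \<beta> n)"
      by (simp add: mult.commute)
  qed (use pos \<open>0 < C\<close> \<open>0 \<le> M\<close> \<open>0 \<le> D\<close> in \<open>auto simp: less_imp_le\<close>)
qed

text \<open>The equality case of Schwarz's lemma, plus compactness of the circle \<open>|z| = 1/2\<close>.\<close>
lemma Schwarz_rotation_or_contraction:
  assumes hol\<phi>: "\<phi> holomorphic_on ball 0 1" and \<phi>_ball: "\<phi> ` ball 0 1 \<subseteq> ball 0 1" and \<phi>0: "\<phi> 0 = 0"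
  obtains (rotation) \<alpha> where "norm \<alpha> = 1" "\<And>z. norm z < 1 \<Longrightarrow> \<phi> z = \<alpha> * z"
    | (contraction) m where "0 < m" "m < 1/2" "\<And>z. norm z = 1/2 \<Longrightarrow> norm (\<phi> z) \<le> m"
proof -
  have \<phi>_lt: "norm (\<phi> z) < 1" if "norm z < 1" for z
    using \<phi>_ball that by (auto simp: image_subset_iff)
  have "continuous_on (sphere 0 (1/2)) (\<lambda>z. norm (\<phi> z))"
    by (intro continuous_intros continuous_on_subset[OF holomorphic_on_imp_continuous_on[OF hol\<phi>]]) auto
  from continuous_attains_sup[OF compact_sphere _ this]
  obtain z0 where z0: "norm z0 = 1/2" and max: "\<And>z. norm z = 1/2 \<Longrightarrow> norm (\<phi> z) \<le> norm (\<phi> z0)"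
    by auto
  show ?thesis
  proof (cases "norm (\<phi> z0) = norm z0")
    case True
    have "\<exists>z. norm z < 1 \<and> z \<noteq> 0 \<and> norm (\<phi> z) = norm z"
      using True z0 by (intro exI[of _ z0]) auto
    then obtain \<alpha> where "\<And>z. norm z < 1 \<Longrightarrow> \<phi> z = \<alpha> * z" "norm \<alpha> = 1"
      using Schwarz_Lemma(3)[OF hol\<phi> \<phi>0 \<phi>_lt, of z0] z0 by auto
    then show ?thesis
      by (rule rotation[rotated])
  next
    case False
    then have "norm (\<phi> z0) < 1/2"
      using Schwarz_norm_le[OF hol\<phi> \<phi>_ball \<phi>0, of z0] z0 by simp
    show ?thesis
    proof (rule contraction)
      show "0 < max (norm (\<phi> z0)) (1/4)" "max (norm (\<phi> z0)) (1/4) < 1/2"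
        using \<open>norm (\<phi> z0) < 1/2\<close> by auto
      show "norm (\<phi> z) \<le> max (norm (\<phi> z0)) (1/4)" if "norm z = 1/2" for z
        using max[OF that] by linarith
    qed
  qed
qed

theorem mainTheorem9:
  fixes \<beta> :: "nat \<Rightarrow> real" and \<phi> :: "complex \<Rightarrow> complex"
  assumes pos: "\<forall>n. \<beta> n > 0"
    and bdd: "\<exists>M. \<forall>n. \<beta> n \<le> M"
    and minor: "polynomial_minoration \<beta>"
    and growth: "\<forall>\<delta>>0. \<exists>C>0. \<forall>m n. real m > (1 + \<delta>) * real n \<longrightarrow> \<beta> m \<le> C * \<beta> n"
    and sym: "symbol \<phi>"
    and fix0: "\<phi> 0 = 0"
  shows "comp_op_bounded \<beta> \<phi>"
proof -
  obtain M where M: "\<And>n. \<beta> n \<le> M"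
    using bdd by blast
  have hol\<phi>: "\<phi> holomorphic_on ball 0 1" and \<phi>_ball: "\<phi> ` ball 0 1 \<subseteq> ball 0 1"
    using sym by (auto simp: symbol_def)
  show ?thesis
  proof (rule Schwarz_rotation_or_contraction[OF hol\<phi> \<phi>_ball fix0])
    fix \<alpha> :: complex
    assume "norm \<alpha> = 1" "\<And>z. norm z < 1 \<Longrightarrow> \<phi> z = \<alpha> * z"
    then show ?thesis
      using pos by (intro comp_op_bounded_rotation[of \<phi> \<alpha>]) (auto simp: less_imp_le)
  next
    fix m :: real
    assume "0 < m" "m < 1/2" "\<And>z. norm z = 1/2 \<Longrightarrow> norm (\<phi> z) \<le> m"
    then show ?thesis
      using pos by (intro comp_op_bounded_contraction[OF _ M minor growth hol\<phi> \<phi>_ball fix0]) auto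
  qed
qed

end
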